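(* For all $n\in\mathbb{N}$ and $q\ge 2$, $\kappa_{n,q}\ge \lfloor n/2\rfloor$.
   Context: Let $q\ge 2$, $A=\{0,1,\dots,q-1\}$, $[n]=\{1,\dots,n\}$, and let $F(n,q)$ be the set of all maps $A^n\to A^n$. For $f\in F(m,q)$ and $i\in[m]$, $f_i$ is the $i$-th coordinate function and $f^i(x)=(x_1,\dots,x_{i-1},f_i(x),x_{i+1},\dots,x_m)$; for a word $w=(w_1,\dots,w_t)$ over $[m]$, $f^w=f^{w_t}\circ\cdots\circ f^{w_1}$. $\Pi([m])$ is the set of permutations of $[m]$ written as words $(w_1,\dots,w_m)$; $w(i)$ is the position of $i$ in $w$. $\mathrm{pr}_{[n]}:A^m\to A^n$ is the projection onto the first $n$ coordinates. For $m\ge n$, $(f,w)$ with $f\in F(m,q)$, $w\in\Pi([m])$ sequentializes $h\in F(n,q)$ if $\mathrm{pr}_{[n]}\circ f^w=h\circ\mathrm{pr}_{[n]}$. For $u\in\Pi([n])$, $w\in\Pi([m])$ respects $u$ if for all $i,j\in[n]$, $u(i)<u(j)$ implies $w(i)<w(j)$. $\kappa(h,u)$ is the smallest $k\ge0$ such that some $f\in F(n+k,q)$ and $w\in\Pi([n+k])$ respecting $u$ sequentialize $h$. Finally $\kappa_{n,q}=\max\{\kappa(h,u): h\in F(n,q),\ u\in\Pi([n])\}$. *)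

theory Defs
  imports Main
begin

text \<open>Points of A^n, A = {0..q-1}, are lists of length n with entries < q;
  coordinate i (for i in [n] = {1..n}) is the list entry at index i - 1.\<close>
definition space :: "nat \<Rightarrow> nat \<Rightarrow> nat list set" where
  "space n q = {x. length x = n \<and> (\<forall>a\<in>set x. a < q)}"

text \<open>F(n,q): maps A^n to A^n (only their values on A^n matter).\<close>
definition Fmaps :: "nat \<Rightarrow> nat \<Rightarrow> (nat list \<Rightarrow> nat list) set" where
  "Fmaps n q = {f. \<forall>x\<in>space n q. f x \<in> space n q}"

definition upd :: "(nat list \<Rightarrow> nat list) \<Rightarrow> nat \<Rightarrow> nat list \<Rightarrow> nat list" where
  "upd f i x = x[i - 1 := f x ! (i - 1)]"

definition fword :: "(nat list \<Rightarrow> nat list) \<Rightarrow> nat list \<Rightarrow> nat list \<Rightarrow> nat list" where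
  "fword f w = fold (\<lambda>i. upd f i) w"

definition perm_word :: "nat \<Rightarrow> nat list \<Rightarrow> bool" where
  "perm_word m w \<longleftrightarrow> distinct w \<and> set w = {1..m}"

definition pos :: "nat list \<Rightarrow> nat \<Rightarrow> nat" where
  "pos w i = Suc (LEAST k. k < length w \<and> w ! k = i)"

definition respects_perm :: "nat \<Rightarrow> nat list \<Rightarrow> nat list \<Rightarrow> bool" where
  "respects_perm n w u \<longleftrightarrow> (\<forall>i\<in>{1..n}. \<forall>j\<in>{1..n}. pos u i < pos u j \<longrightarrow> pos w i < pos w j)"

text \<open>(f,w) sequentializes h (with m = length of the extended system).\<close>
definition sequentializes :: "nat \<Rightarrow> nat \<Rightarrow> nat \<Rightarrow> (nat list \<Rightarrow> nat list) \<Rightarrow> nat list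
    \<Rightarrow> (nat list \<Rightarrow> nat list) \<Rightarrow> bool" where
  "sequentializes q n m f w h \<longleftrightarrow> (\<forall>x\<in>space m q. take n (fword f w x) = h (take n x))"

definition kappa :: "nat \<Rightarrow> nat \<Rightarrow> (nat list \<Rightarrow> nat list) \<Rightarrow> nat list \<Rightarrow> nat" where
  "kappa n q h u = (LEAST k. \<exists>f\<in>Fmaps (n + k) q. \<exists>w. perm_word (n + k) w \<and> respects_perm n w u
       \<and> sequentializes q n (n + k) f w h)"

definition kappa_max :: "nat \<Rightarrow> nat \<Rightarrow> nat" where
  "kappa_max n q = Max {kappa n q h u | h u. h \<in> Fmaps n q \<and> perm_word n u}"

end

theory Submission
  imports Defs
begin

text \<open>Let \<open>h\<close> swap the blocks of coordinates \<open>1..p\<close> and \<open>p+1..2p\<close>, with \<open>p = \<lfloor>n/2\<rfloor>\<close>,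
  and let \<open>u\<close> be the identity order. A sequentialization respecting \<open>u\<close> updates all of
  \<open>1..p\<close> no later than \<open>p\<close>, and none of \<open>p+1..n\<close> before \<open>p\<close>. Run it on inputs that vanish
  outside the first block: just after \<open>p\<close> is updated, the first \<open>n\<close> coordinates are all \<open>0\<close>
  (coordinates \<open>1..p\<close> already hold their final value, a copy of the zero second block),
  yet the rest of the run still has to write the first block into the second. So the \<open>k\<close>
  extra coordinates carry an injective image of \<open>A\<^sup>p\<close>, whence \<open>q\<^sup>p \<le> q\<^sup>k\<close>. For \<open>\<kappa>\<close> to be
  defined at all, every \<open>h\<close> is sequentialized with \<open>n\<close> extra coordinates: copy the input, then
  evaluate \<open>h\<close> on the copy.\<close>

lemma space_eq_lists: "space m q = {xs. set xs \<subseteq> {..<q} \<and> length xs = m}"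
  unfolding space_def by auto

lemma finite_space: "finite (space m q)"
  unfolding space_eq_lists by (rule finite_lists_length_eq) simp

lemma card_space: "card (space m q) = q ^ m"
  unfolding space_eq_lists by (subst card_lists_length_eq) simp_all

lemma length_fword [simp]: "length (fword f w x) = length x"
  unfolding fword_def by (induction w arbitrary: x) (simp_all add: upd_def)

lemma fword_append: "fword f (w1 @ w2) = fword f w2 \<circ> fword f w1"
  unfolding fword_def by simp

lemma fword_Cons: "fword f (i # w) x = fword f w (upd f i x)"
  unfolding fword_def by simp

lemma fword_nth_notin:
  assumes "Suc t \<notin> set w" "0 \<notin> set w"
  shows "fword f w x ! t = x ! t"
  using assms unfolding fword_def
  by (induction w arbitrary: x) (auto simp: upd_def nth_list_update)

lemma fword_in_space:
  assumes "f \<in> Fmaps m q" "x \<in> space m q"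
  shows "fword f w x \<in> space m q"
  using assms(2) unfolding fword_def
proof (induction w arbitrary: x)
  case (Cons i w)
  have "f x \<in> space m q" using assms(1) Cons.prems unfolding Fmaps_def by blast
  then have "upd f i x \<in> space m q"
    using Cons.prems unfolding upd_def space_def
    by (cases "i - 1 < m")
      (auto simp: list_update_beyond not_less dest!: set_update_subset_insert[THEN subsetD])
  then show ?case using Cons.IH by simp
qed simp

lemma fword_nth_frozen:
  assumes w: "0 \<notin> set w" "\<forall>i\<in>set w. i - 1 \<notin> S"
    and v: "\<And>y i. length y = length x \<Longrightarrow> \<forall>t\<in>S. y ! t = x ! t \<Longrightarrow> i \<in> set w
      \<Longrightarrow> f y ! (i - 1) = v ! (i - 1)"
    and t: "t < length x"
  shows "fword f w x ! t = (if Suc t \<in> set w then v ! t else x ! t)"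
  using w v t
proof (induction w arbitrary: x)
  case Nil
  then show ?case by (simp add: fword_def)
next
  case (Cons i w)
  define x' where "x' = upd f i x"
  have "f x ! (i - 1) = v ! (i - 1)" by (rule Cons.prems(3)) auto
  then have x': "x' = x[i - 1 := v ! (i - 1)]" by (simp add: x'_def upd_def)
  have "fword f w x' ! t = (if Suc t \<in> set w then v ! t else x' ! t)"
  proof (rule Cons.IH)
    fix y j assume "length y = length x'" "\<forall>t\<in>S. y ! t = x' ! t" "j \<in> set w"
    then show "f y ! (j - 1) = v ! (j - 1)"
      using Cons.prems(2) by (intro Cons.prems(3)) (auto simp: x', metis nth_list_update_neq)
  qed (use Cons.prems in \<open>auto simp: x'\<close>)
  then show ?case
    using Cons.prems(1,4) by (auto simp: fword_Cons x'_def[symmetric] x' nth_list_update)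
qed

lemma pos_nth: "distinct w \<Longrightarrow> m < length w \<Longrightarrow> pos w (w ! m) = Suc m"
  unfolding pos_def
  by (rule arg_cong[where f=Suc], rule Least_equality) (auto simp: nth_eq_iff_index_eq)

lemma in_set_take_iff_pos_le:
  assumes "distinct w" "i \<in> set w"
  shows "i \<in> set (take m w) \<longleftrightarrow> pos w i \<le> m"
proof -
  obtain j where j: "j < length w" "w ! j = i" using assms(2) by (metis in_set_conv_nth)
  have "i \<in> set (take m w) \<longleftrightarrow> j < m"
    using assms(1) j by (auto simp: in_set_conv_nth nth_eq_iff_index_eq)
  then show ?thesis using pos_nth[OF assms(1) j(1)] j(2) by (simp add: Suc_le_eq)
qed

lemma perm_word_upt: "perm_word n [1..<Suc n]"
  by (auto simp: perm_word_def)

lemma pos_upt: "i \<in> {1..n} \<Longrightarrow> pos [1..<Suc n] i = i"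
proof -
  assume i: "i \<in> {1..n}"
  then have "[1..<Suc n] ! (i - 1) = i" "i - 1 < length [1..<Suc n]" by (auto simp del: upt_Suc)
  then show ?thesis using pos_nth[of "[1..<Suc n]" "i - 1"] i by (simp del: upt_Suc)
qed

lemma pos_append_shift:
  assumes "distinct (v @ u)" "i \<in> set u"
  shows "pos (v @ u) i = length v + pos u i"
proof -
  obtain m where m: "m < length u" "u ! m = i" using assms(2) by (metis in_set_conv_nth)
  have "pos (v @ u) ((v @ u) ! (length v + m)) = Suc (length v + m)"
    using assms(1) m(1) by (intro pos_nth) auto
  moreover have "pos u (u ! m) = Suc m" using assms(1) m(1) by (intro pos_nth) auto
  ultimately show ?thesis using m(2) by (simp add: nth_append)
qed

definition copy_eval :: "nat \<Rightarrow> (nat list \<Rightarrow> nat list) \<Rightarrow> nat list \<Rightarrow> nat list" where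
  "copy_eval n h y = map (\<lambda>t. if t < n then h (drop n y) ! t else y ! (t - n)) [0..<n + n]"

lemma copy_eval_in_Fmaps:
  assumes "h \<in> Fmaps n q"
  shows "copy_eval n h \<in> Fmaps (n + n) q"
  unfolding Fmaps_def mem_Collect_eq
proof
  fix y assume y: "y \<in> space (n + n) q"
  then have "drop n y \<in> space n q" unfolding space_def by (auto dest: in_set_dropD)
  then have "h (drop n y) \<in> space n q" using assms unfolding Fmaps_def by blast
  then show "copy_eval n h y \<in> space (n + n) q"
    using y unfolding space_def copy_eval_def by (auto simp: all_set_conv_all_nth)
qed

lemma fword_copy_eval_copies:
  assumes lx: "length x = n + n"
  shows "fword (copy_eval n h) [Suc n..<Suc (n + n)] x = take n x @ take n x"
proof (rule nth_equalityI)
  fix t assume "t < length (fword (copy_eval n h) [Suc n..<Suc (n + n)] x)"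
  then have t: "t < n + n" using lx by simp
  have "fword (copy_eval n h) [Suc n..<Suc (n + n)] x ! t
      = (if Suc t \<in> set [Suc n..<Suc (n + n)] then (take n x @ take n x) ! t else x ! t)"
  proof (rule fword_nth_frozen[where S = "{..<n}"])
    fix y i assume "\<forall>t\<in>{..<n}. y ! t = x ! t" "i \<in> set [Suc n..<Suc (n + n)]"
    then show "copy_eval n h y ! (i - 1) = (take n x @ take n x) ! (i - 1)"
      using lx by (auto simp: copy_eval_def nth_append)
  qed (use t lx in auto)
  then show "fword (copy_eval n h) [Suc n..<Suc (n + n)] x ! t = (take n x @ take n x) ! t"
    using t lx by (auto simp: nth_append)
qed (simp add: lx)

lemma fword_copy_eval_evaluates:
  assumes la: "length a = n" and lh: "length (h a) = n" and u: "set u = {1..n}"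
  shows "take n (fword (copy_eval n h) u (a @ a)) = h a"
proof (rule nth_equalityI)
  fix t assume "t < length (take n (fword (copy_eval n h) u (a @ a)))"
  then have t: "t < n" using la by simp
  have "fword (copy_eval n h) u (a @ a) ! t = (if Suc t \<in> set u then (h a @ a) ! t else (a @ a) ! t)"
  proof (rule fword_nth_frozen[where S = "{n..<n + n}"])
    fix y i assume y: "length y = length (a @ a)" "\<forall>t\<in>{n..<n + n}. y ! t = (a @ a) ! t"
      and i: "i \<in> set u"
    have "drop n y = a"
      by (rule nth_equalityI) (use y la in \<open>force simp: nth_append\<close>)+
    then show "copy_eval n h y ! (i - 1) = (h a @ a) ! (i - 1)"
      using i u lh la by (force simp: copy_eval_def nth_append)
  qed (use t la u in auto)
  then show "take n (fword (copy_eval n h) u (a @ a)) ! t = h a ! t"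
    using t lh u by (auto simp: nth_append)
qed (use la lh in simp)

lemma sequentializes_copy_eval:
  assumes h: "h \<in> Fmaps n q" and u: "perm_word n u"
  shows "sequentializes q n (n + n) (copy_eval n h) ([Suc n..<Suc (n + n)] @ u) h"
  unfolding sequentializes_def
proof
  fix x assume x: "x \<in> space (n + n) q"
  then have "take n x \<in> space n q" unfolding space_def by (auto dest: in_set_takeD)
  then have "length (h (take n x)) = n" using h unfolding Fmaps_def space_def by auto
  moreover have "length x = n + n" using x by (simp add: space_def)
  ultimately show "take n (fword (copy_eval n h) ([Suc n..<Suc (n + n)] @ u) x) = h (take n x)"
    using u by (simp add: fword_append fword_copy_eval_copies fword_copy_eval_evaluates perm_word_def
        del: upt_Suc)
qed

lemma exists_sequentialization:
  assumes h: "h \<in> Fmaps n q" and u: "perm_word n u"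
  shows "\<exists>f\<in>Fmaps (n + n) q. \<exists>w. perm_word (n + n) w \<and> respects_perm n w u
    \<and> sequentializes q n (n + n) f w h"
proof (intro bexI exI conjI)
  let ?w = "[Suc n..<Suc (n + n)] @ u"
  show w: "perm_word (n + n) ?w"
    using u unfolding perm_word_def by auto
  have "pos ?w i = n + pos u i" if "i \<in> {1..n}" for i
    using pos_append_shift[of "[Suc n..<Suc (n + n)]" u i] w u that
    by (simp add: perm_word_def del: upt_Suc)
  then show "respects_perm n ?w u" unfolding respects_perm_def by simp
qed (use copy_eval_in_Fmaps sequentializes_copy_eval h u in blast)+

lemma kappa_le:
  assumes "h \<in> Fmaps n q" "perm_word n u"
  shows "kappa n q h u \<le> n"
  unfolding kappa_def by (rule Least_le) (rule exists_sequentialization[OF assms])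

lemma kappa_attained:
  assumes "h \<in> Fmaps n q" "perm_word n u"
  obtains f w where "f \<in> Fmaps (n + kappa n q h u) q" "perm_word (n + kappa n q h u) w"
    "respects_perm n w u" "sequentializes q n (n + kappa n q h u) f w h"
proof -
  have "\<exists>k. \<exists>f\<in>Fmaps (n + k) q. \<exists>w. perm_word (n + k) w \<and> respects_perm n w u
      \<and> sequentializes q n (n + k) f w h"
    using exists_sequentialization[OF assms] by blast
  from LeastI_ex[OF this] show thesis
    using that unfolding kappa_def by blast
qed

lemma respects_upt_split:
  assumes w: "perm_word (n + k) w" and resp: "respects_perm n w [1..<Suc n]" and p: "p \<le> n"
  obtains w1 w2 where "w = w1 @ w2" "\<forall>i\<in>{1..p}. i \<notin> set w2" "\<forall>j\<in>{p<..n}. j \<notin> set w1"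
proof (cases "p = 0")
  case True
  then show thesis using that[of "[]" w] by simp
next
  case False
  have dw: "distinct w" and sw: "set w = {1..n + k}" using w unfolding perm_word_def by auto
  have order: "pos w i < pos w j" if "i \<in> {1..n}" "j \<in> {1..n}" "i < j" for i j
    using resp that pos_upt[of i n] pos_upt[of j n] unfolding respects_perm_def by auto
  have before: "pos w i \<le> pos w p" if "i \<in> {1..p}" for i
    using order[of i p] that p by (cases "i = p") auto
  have after: "pos w p < pos w j" if "j \<in> {p<..n}" for j
    using order[of p j] that p False by auto
  show thesis
  proof (rule that[of "take (pos w p) w" "drop (pos w p) w"])
    show "\<forall>i\<in>{1..p}. i \<notin> set (drop (pos w p) w)"
      using before in_set_take_iff_pos_le[OF dw] set_take_disj_set_drop_if_distinct[OF dw order.refl]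
        sw p by fastforce
    show "\<forall>j\<in>{p<..n}. j \<notin> set (take (pos w p) w)"
      using after in_set_take_iff_pos_le[OF dw] sw by fastforce
  qed simp
qed

lemma le_of_inj_on_space:
  assumes q: "q \<ge> 2" and inj: "inj_on g (space p q)" and g: "g ` space p q \<subseteq> space k q"
  shows "p \<le> k"
proof -
  have "q ^ p \<le> q ^ k"
    using card_inj_on_le[OF inj g finite_space] by (simp add: card_space)
  then show ?thesis using q by (simp add: power_le_imp_le_exp)
qed

definition swap_blocks :: "nat \<Rightarrow> nat list \<Rightarrow> nat list" where
  "swap_blocks p z = take p (drop p z) @ take p z @ drop (2 * p) z"

lemma swap_blocks_in_Fmaps: "2 * p \<le> n \<Longrightarrow> swap_blocks p \<in> Fmaps n q"
  unfolding Fmaps_def space_def swap_blocks_def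
  by (auto dest: in_set_takeD in_set_dropD)

lemma swap_blocks_nth_low: "2 * p \<le> length z \<Longrightarrow> t < p \<Longrightarrow> swap_blocks p z ! t = z ! (p + t)"
  by (simp add: swap_blocks_def nth_append)

lemma take_drop_swap_blocks: "2 * p \<le> length z \<Longrightarrow> take p (drop p (swap_blocks p z)) = take p z"
  by (simp add: swap_blocks_def)

lemma swap_blocks_run_clears_prefix:
  assumes p: "2 * p \<le> n" and q: "0 < q" and a: "a \<in> space p q"
    and seq: "sequentializes q n (n + k) f (w1 @ w2) (swap_blocks p)"
    and late: "\<forall>i\<in>{1..p}. i \<notin> set w2" and early: "\<forall>j\<in>{p<..n}. j \<notin> set w1"
    and no_zero: "0 \<notin> set (w1 @ w2)"
  defines "x \<equiv> a @ replicate (n + k - p) 0"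
  shows "take n (fword f w1 x) = replicate n 0"
proof (rule nth_equalityI)
  have la: "length a = p" using a by (simp add: space_def)
  fix t assume "t < length (take n (fword f w1 x))"
  then have t: "t < n" by simp
  show "take n (fword f w1 x) ! t = replicate n 0 ! t"
  proof (cases "t < p")
    case True
    have "x \<in> space (n + k) q" using a q p by (auto simp: space_def x_def)
    then have final: "take n (fword f w2 (fword f w1 x)) = swap_blocks p (take n x)"
      using seq by (simp add: sequentializes_def fword_append)
    have "fword f w1 x ! t = take n (fword f w2 (fword f w1 x)) ! t"
      using late True t no_zero by (simp add: fword_nth_notin)
    also have "\<dots> = 0"
      using final True p la by (simp add: swap_blocks_nth_low nth_append x_def)
    finally show ?thesis using t by simp
  next
    case False
    have "fword f w1 x ! t = x ! t"
      using early False t no_zero by (intro fword_nth_notin) auto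
    then show ?thesis using False t la by (simp add: nth_append x_def)
  qed
qed (use a in \<open>simp add: x_def space_def\<close>)

lemma sequentializes_swap_blocks_imp_le:
  assumes q: "q \<ge> 2" and p: "2 * p \<le> n"
    and f: "f \<in> Fmaps (n + k) q" and w: "perm_word (n + k) w"
    and resp: "respects_perm n w [1..<Suc n]"
    and seq: "sequentializes q n (n + k) f w (swap_blocks p)"
  shows "p \<le> k"
proof -
  have "p \<le> n" using p by simp
  then obtain w1 w2 where ww: "w = w1 @ w2"
    and late: "\<forall>i\<in>{1..p}. i \<notin> set w2" and early: "\<forall>j\<in>{p<..n}. j \<notin> set w1"
    by (rule respects_upt_split[OF w resp])
  have no_zero: "0 \<notin> set (w1 @ w2)" using w ww by (simp add: perm_word_def)
  define c where "c = replicate (n + k - p) (0::nat)"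
  define halfway where "halfway a = fword f w1 (a @ c)" for a
  have input: "a @ c \<in> space (n + k) q" if "a \<in> space p q" for a
    using that q p by (auto simp: space_def c_def)
  have final: "take n (fword f w2 (halfway a)) = swap_blocks p (take n (a @ c))"
    if "a \<in> space p q" for a
    using seq input[OF that] by (simp add: sequentializes_def halfway_def ww fword_append)
  have cleared: "take n (halfway a) = replicate n 0" if "a \<in> space p q" for a
    unfolding halfway_def c_def
    using swap_blocks_run_clears_prefix[OF p _ that seq[unfolded ww] late early no_zero] q by simp
  have recover: "take p (drop p (swap_blocks p (take n (a @ c)))) = a" if "a \<in> space p q" for a
    using that p by (subst take_drop_swap_blocks) (auto simp: space_def c_def)
  define g where "g a = drop n (halfway a)" for a
  have "inj_on g (space p q)"
  proof
    fix a b assume a: "a \<in> space p q" and b: "b \<in> space p q" and "g a = g b"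
    then have "halfway a = halfway b"
      using cleared[OF a] cleared[OF b] unfolding g_def by (metis append_take_drop_id)
    then have "swap_blocks p (take n (a @ c)) = swap_blocks p (take n (b @ c))"
      using final[OF a] final[OF b] by simp
    then show "a = b" using recover[OF a] recover[OF b] by metis
  qed
  moreover have "g ` space p q \<subseteq> space k q"
    using fword_in_space[OF f input] unfolding g_def halfway_def space_def
    by (auto dest: in_set_dropD)
  ultimately show ?thesis using le_of_inj_on_space[OF q] by blast
qed

lemma kappa_swap_blocks_ge:
  assumes "q \<ge> 2" "2 * p \<le> n"
  shows "p \<le> kappa n q (swap_blocks p) [1..<Suc n]"
proof -
  from swap_blocks_in_Fmaps[OF assms(2)] perm_word_upt show ?thesis
    by (rule kappa_attained) (use sequentializes_swap_blocks_imp_le[OF assms] in blast)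
qed

lemma finite_kappa_values: "finite {kappa n q h u | h u. h \<in> Fmaps n q \<and> perm_word n u}"
  by (rule finite_subset[of _ "{..n}"]) (auto dest: kappa_le)

theorem mainTheorem2:
  fixes n q :: nat
  assumes "q \<ge> 2"
  shows "kappa_max n q \<ge> n div 2"
proof -
  have "swap_blocks (n div 2) \<in> Fmaps n q" by (rule swap_blocks_in_Fmaps) simp
  then have "kappa n q (swap_blocks (n div 2)) [1..<Suc n] \<le> kappa_max n q"
    unfolding kappa_max_def using perm_word_upt by (intro Max_ge[OF finite_kappa_values]) blast
  moreover have "n div 2 \<le> kappa n q (swap_blocks (n div 2)) [1..<Suc n]"
    using assms by (intro kappa_swap_blocks_ge) auto
  ultimately show ?thesis by simp
qed

end
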